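(* Let $F\in[0,1]$ and $0\le p\le F$. For $i,j\in\{0,1\}$ let $F'_{ij,\max}=\max\{F'_{ij}(\rho_1\otimes\rho_2):\rho_1,\rho_2\in S_{p,F}\}$ and $F'_{ij,\min}=\min\{F'_{ij}(\rho_1\otimes\rho_2):\rho_1,\rho_2\in S_{p,F}\}$. Then these quantities do not depend on $(i,j)$: $F'_{ij,\max}=F'_{00,\max}$ and $F'_{ij,\min}=F'_{00,\min}$ for all $i,j$.
   Context: For qubit registers $(R,T)$, $|\Psi_{ij}\rangle_{RT}=(I_R\otimes(X^iZ^j)_T)\tfrac1{\sqrt2}(|00\rangle+|11\rangle)$. $S_{p,F}$ is the set of two-qubit density operators $\rho$ with $\rho=p|\Psi_{00}\rangle\langle\Psi_{00}|+(1-p)\sigma$ for some density operator $\sigma$ and $\langle\Psi_{00}|\rho|\Psi_{00}\rangle=F$. For $\rho_1$ on $(A_1,B_1)$ and $\rho_2$ on $(A_2,B_2)$, $p'_{ij}(\rho_1\otimes\rho_2)=\mathrm{Tr}[|\Psi_{ij}\rangle\langle\Psi_{ij}|_{A_1A_2}\rho_1\otimes\rho_2]$ and $F'_{ij}(\rho_1\otimes\rho_2)=\frac1{p'_{ij}}\mathrm{Tr}[|\Psi_{ij}\rangle\langle\Psi_{ij}|_{B_1B_2}|\Psi_{ij}\rangle\langle\Psi_{ij}|_{A_1A_2}\rho_1\otimes\rho_2]$ (postselected end-to-end fidelity of an entanglement swap with Bell-state measurement outcome $ij$ on $(A_1,A_2)$). *)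

theory Defs
  imports Complex_Main "HOL-Library.Complex_Order"
begin

text \<open>Qubit basis: False = |0>, True = |1>. Operators on a finite-dimensional
system with basis indexed by a finite type 'a are matrices 'a => 'a => complex.\<close>

type_synonym 'a qop = "'a \<Rightarrow> 'a \<Rightarrow> complex"

definition mmult :: "('a::finite) qop \<Rightarrow> 'a qop \<Rightarrow> 'a qop" where
  "mmult A B = (\<lambda>x y. \<Sum>z\<in>UNIV. A x z * B z y)"

definition mid :: "('a::finite) qop" where
  "mid = (\<lambda>x y. if x = y then 1 else 0)"

fun mpow :: "('a::finite) qop \<Rightarrow> nat \<Rightarrow> 'a qop" where
  "mpow A 0 = mid"
| "mpow A (Suc n) = mmult A (mpow A n)"

definition trace :: "('a::finite) qop \<Rightarrow> complex" where
  "trace A = (\<Sum>x\<in>UNIV. A x x)"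

definition density :: "('a::finite) qop \<Rightarrow> bool" where
  "density \<rho> \<longleftrightarrow> (\<forall>x y. \<rho> x y = cnj (\<rho> y x))
     \<and> (\<forall>v::'a \<Rightarrow> complex. (\<Sum>x\<in>UNIV. \<Sum>y\<in>UNIV. cnj (v x) * \<rho> x y * v y) \<ge> 0)
     \<and> trace \<rho> = 1"

definition pauliX :: "bool qop" where
  "pauliX = (\<lambda>a b. if a \<noteq> b then 1 else 0)"

definition pauliZ :: "bool qop" where
  "pauliZ = (\<lambda>a b. if a = b then (if a then -1 else 1) else 0)"

definition phi_plus :: "bool \<times> bool \<Rightarrow> complex" where
  "phi_plus = (\<lambda>(r, t). if r = t then complex_of_real (1 / sqrt 2) else 0)"

text \<open>Psi_ij = (I_R (x) (X^i Z^j)_T) phi_plus, as a vector indexed by (r,t).\<close>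
definition bell :: "nat \<Rightarrow> nat \<Rightarrow> bool \<times> bool \<Rightarrow> complex" where
  "bell i j = (\<lambda>(r, t). \<Sum>s\<in>UNIV. mmult (mpow pauliX i) (mpow pauliZ j) t s * phi_plus (r, s))"

definition proj :: "('a \<Rightarrow> complex) \<Rightarrow> 'a qop" where
  "proj \<psi> = (\<lambda>x y. \<psi> x * cnj (\<psi> y))"

definition expect :: "('a::finite \<Rightarrow> complex) \<Rightarrow> 'a qop \<Rightarrow> complex" where
  "expect \<psi> \<rho> = (\<Sum>x\<in>UNIV. \<Sum>y\<in>UNIV. cnj (\<psi> x) * \<rho> x y * \<psi> y)"

definition S_pF :: "real \<Rightarrow> real \<Rightarrow> (bool \<times> bool) qop set" where
  "S_pF p F = {\<rho>. density \<rho>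
      \<and> (\<exists>\<sigma>. density \<sigma> \<and>
            \<rho> = (\<lambda>x y. complex_of_real p * proj (bell 0 0) x y + complex_of_real (1 - p) * \<sigma> x y))
      \<and> expect (bell 0 0) \<rho> = complex_of_real F}"

text \<open>Four-qubit system indexed as ((a1,b1),(a2,b2)) for registers (A1,B1),(A2,B2).\<close>
type_synonym four = "(bool \<times> bool) \<times> (bool \<times> bool)"

definition tensor :: "('a::finite) qop \<Rightarrow> ('b::finite) qop \<Rightarrow> ('a \<times> 'b) qop" where
  "tensor A B = (\<lambda>(x1, x2) (y1, y2). A x1 y1 * B x2 y2)"

text \<open>|Psi_ij><Psi_ij| acting on (A1,A2) (R = A1, T = A2), identity on B1 B2.\<close>
definition projA :: "nat \<Rightarrow> nat \<Rightarrow> four qop" where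
  "projA i j = (\<lambda>((a1, b1), (a2, b2)) ((a1', b1'), (a2', b2')).
      proj (bell i j) (a1, a2) (a1', a2') * (if b1 = b1' \<and> b2 = b2' then 1 else 0))"

text \<open>|Psi_ij><Psi_ij| acting on (B1,B2) (R = B1, T = B2), identity on A1 A2.\<close>
definition projB :: "nat \<Rightarrow> nat \<Rightarrow> four qop" where
  "projB i j = (\<lambda>((a1, b1), (a2, b2)) ((a1', b1'), (a2', b2')).
      proj (bell i j) (b1, b2) (b1', b2') * (if a1 = a1' \<and> a2 = a2' then 1 else 0))"

text \<open>p'_ij and F'_ij (these traces are real; we take real parts).\<close>
definition p_swap :: "nat \<Rightarrow> nat \<Rightarrow> (bool \<times> bool) qop \<Rightarrow> (bool \<times> bool) qop \<Rightarrow> real" where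
  "p_swap i j \<rho>1 \<rho>2 = Re (trace (mmult (projA i j) (tensor \<rho>1 \<rho>2)))"

definition F_swap :: "nat \<Rightarrow> nat \<Rightarrow> (bool \<times> bool) qop \<Rightarrow> (bool \<times> bool) qop \<Rightarrow> real" where
  "F_swap i j \<rho>1 \<rho>2 =
     Re (trace (mmult (projB i j) (mmult (projA i j) (tensor \<rho>1 \<rho>2)))) / p_swap i j \<rho>1 \<rho>2"

text \<open>Set of attainable postselected fidelities for outcome ij, over pairs in S_{p,F}
for which the outcome ij has nonzero probability (F'_ij is undefined otherwise).\<close>
definition F_vals :: "nat \<Rightarrow> nat \<Rightarrow> real \<Rightarrow> real \<Rightarrow> real set" where
  "F_vals i j p F = {F_swap i j \<rho>1 \<rho>2 | \<rho>1 \<rho>2.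
      \<rho>1 \<in> S_pF p F \<and> \<rho>2 \<in> S_pF p F \<and> p_swap i j \<rho>1 \<rho>2 > 0}"

end

theory Submission
  imports Defs
begin

(* For i, j in {0,1} the operator U = X^i Z^j is a real signed permutation matrix, so
   (U (x) U) Psi00 = (I (x) U U^T) Psi00 = Psi00 and |Psi_ij><Psi_ij| = (I (x) U) |Psi00><Psi00| (I (x) U)^*.
   Conjugating rho2 on (A2,B2) by U (x) U therefore maps S_{p,F} onto itself, and inside the
   traces defining p'_ij and F'_ij it can be moved onto the projectors, where it turns the
   outcome-00 projectors on (A1,A2) and (B1,B2) into the outcome-ij ones (the identity on the
   other register absorbs the remaining factor of U).  So p'_ij and F'_ij at (rho1, rho2')
   equal p'_00 and F'_00 at (rho1, rho2), and the sets of attainable fidelities coincide,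
   for every p and F. *)

(* U A U^* for the signed permutation matrix U x y = g x * [pi x = y]. *)
definition signed_conj :: "('a::finite \<Rightarrow> 'a) \<Rightarrow> ('a \<Rightarrow> real) \<Rightarrow> 'a qop \<Rightarrow> 'a qop" where
  "signed_conj \<pi> g A = (\<lambda>x y. complex_of_real (g x * g y) * A (\<pi> x) (\<pi> y))"

lemma tensor_signed_conj_right:
  "tensor A (signed_conj \<pi> g B) = signed_conj (map_prod id \<pi>) (g \<circ> snd) (tensor A B)"
  by (intro ext) (auto simp: tensor_def signed_conj_def algebra_simps)

locale signed_involution =
  fixes \<pi> :: "'a::finite \<Rightarrow> 'a" and g :: "'a \<Rightarrow> real"
  assumes involution: "\<pi> (\<pi> x) = x"
    and sign_square: "g x * g x = 1"
    and sign_perm: "g (\<pi> x) = g x"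
begin

lemma sign_square_complex: "complex_of_real (g x) * complex_of_real (g x) = 1"
  by (metis of_real_1 of_real_mult sign_square)

lemma sum_reindex: "(\<Sum>x\<in>UNIV. f (\<pi> x)) = (\<Sum>x\<in>UNIV. f x :: 'b::comm_monoid_add)"
  using sum.reindex_bij_betw[OF involuntory_imp_bij[OF involution]] by blast

lemma sum_sum_reindex:
  "(\<Sum>x\<in>UNIV. \<Sum>y\<in>UNIV. f (\<pi> x) (\<pi> y)) = (\<Sum>x\<in>UNIV. \<Sum>y\<in>UNIV. f x y :: 'b::comm_monoid_add)"
  by (simp add: sum_reindex[where f = "\<lambda>x. \<Sum>y\<in>UNIV. f x y"]
      sum_reindex[where f = "\<lambda>y. f _ y"])

lemma mmult_signed_conj:
  "mmult (signed_conj \<pi> g A) (signed_conj \<pi> g B) = signed_conj \<pi> g (mmult A B)"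
proof (intro ext)
  fix x y
  have "mmult (signed_conj \<pi> g A) (signed_conj \<pi> g B) x y
      = (\<Sum>z\<in>UNIV. complex_of_real (g x * g y) * (A (\<pi> x) (\<pi> z) * B (\<pi> z) (\<pi> y)))"
    unfolding mmult_def signed_conj_def
    by (intro sum.cong refl) (simp add: algebra_simps sign_square_complex)
  also have "\<dots> = (\<Sum>z\<in>UNIV. complex_of_real (g x * g y) * (A (\<pi> x) z * B z (\<pi> y)))"
    by (rule sum_reindex)
  finally show "mmult (signed_conj \<pi> g A) (signed_conj \<pi> g B) x y = signed_conj \<pi> g (mmult A B) x y"
    by (simp add: signed_conj_def mmult_def sum_distrib_left)
qed

lemma trace_signed_conj: "trace (signed_conj \<pi> g A) = trace A"
  using sum_reindex[where f = "\<lambda>x. A x x"]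
  by (simp add: trace_def signed_conj_def sign_square_complex)

lemma signed_conj_signed_conj: "signed_conj \<pi> g (signed_conj \<pi> g A) = A"
proof (intro ext)
  fix x y
  have "(g x * g y) * (g x * g y) = 1"
    using sign_square[of x] sign_square[of y] by algebra
  moreover have "signed_conj \<pi> g (signed_conj \<pi> g A) x y
      = complex_of_real ((g x * g y) * (g x * g y)) * A x y"
    unfolding signed_conj_def involution sign_perm by (simp only: of_real_mult mult_ac)
  ultimately show "signed_conj \<pi> g (signed_conj \<pi> g A) x y = A x y"
    by simp
qed

lemma signed_conj_combination:
  "signed_conj \<pi> g (\<lambda>x y. a * A x y + b * B x y)
     = (\<lambda>x y. a * signed_conj \<pi> g A x y + b * signed_conj \<pi> g B x y)"
  by (intro ext) (simp add: signed_conj_def algebra_simps)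

lemma expect_signed_conj:
  "expect \<psi> (signed_conj \<pi> g A) = expect (\<lambda>x. complex_of_real (g x) * \<psi> (\<pi> x)) A"
  using sum_sum_reindex[where f = "\<lambda>x y. cnj (complex_of_real (g x) * \<psi> (\<pi> x)) * A x y
                                          * (complex_of_real (g y) * \<psi> (\<pi> y))"]
  by (simp add: expect_def signed_conj_def involution sign_perm ac_simps)

lemma density_signed_conj:
  assumes "density \<rho>"
  shows "density (signed_conj \<pi> g \<rho>)"
proof -
  have hermitian: "\<rho> x y = cnj (\<rho> y x)" for x y
    using assms unfolding density_def by blast
  have positive: "0 \<le> expect v \<rho>" for v
    using assms unfolding density_def expect_def by blast
  have "trace \<rho> = 1"
    using assms unfolding density_def by blast
  then have "trace (signed_conj \<pi> g \<rho>) = 1"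
    by (simp add: trace_signed_conj)
  moreover have "signed_conj \<pi> g \<rho> x y = cnj (signed_conj \<pi> g \<rho> y x)" for x y
    unfolding signed_conj_def hermitian[of "\<pi> x" "\<pi> y"] by (simp add: mult.commute)
  moreover have "0 \<le> expect v (signed_conj \<pi> g \<rho>)" for v
    by (simp add: expect_signed_conj positive)
  ultimately show ?thesis
    unfolding density_def expect_def by blast
qed

context
  fixes \<psi> :: "'a \<Rightarrow> complex"
  assumes eigenvector: "\<And>x. complex_of_real (g x) * \<psi> (\<pi> x) = \<psi> x"
begin

lemma expect_signed_conj_eigenvector: "expect \<psi> (signed_conj \<pi> g A) = expect \<psi> A"
  by (simp add: expect_signed_conj eigenvector)

lemma signed_conj_proj_eigenvector: "signed_conj \<pi> g (proj \<psi>) = proj \<psi>"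
proof (intro ext)
  fix x y
  have "signed_conj \<pi> g (proj \<psi>) x y
      = complex_of_real (g x) * \<psi> (\<pi> x) * cnj (complex_of_real (g y) * \<psi> (\<pi> y))"
    by (simp add: signed_conj_def proj_def ac_simps)
  then show "signed_conj \<pi> g (proj \<psi>) x y = proj \<psi> x y"
    by (simp only: eigenvector proj_def)
qed

end

end

lemma signed_involution_lift_snd:
  assumes "signed_involution \<pi> g"
  shows "signed_involution (map_prod id \<pi>) (g \<circ> snd)"
  using assms by (auto simp: signed_involution_def)

(* (X^i Z^j) t s = z_sign j s if t = x_perm i s, and 0 otherwise (for i, j in {0,1} only). *)
definition x_perm :: "nat \<Rightarrow> bool \<Rightarrow> bool" where
  "x_perm i t = (t \<noteq> (i = 1))"

definition z_sign :: "nat \<Rightarrow> bool \<Rightarrow> real" where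
  "z_sign j t = (if j = 1 \<and> t then -1 else 1)"

lemma bell_apply:
  assumes "i \<in> {0, 1}" "j \<in> {0, 1}"
  shows "bell i j (r, t) = complex_of_real (z_sign j (x_perm i t)) * phi_plus (r, x_perm i t)"
  using assms
  by (cases r; cases t; auto simp: bell_def mmult_def mid_def pauliX_def pauliZ_def
      x_perm_def z_sign_def UNIV_bool)

lemma proj_bell:
  assumes "i \<in> {0, 1}" "j \<in> {0, 1}"
  shows "proj (bell i j) = signed_conj (map_prod id (x_perm i)) (z_sign j \<circ> snd) (proj (bell 0 0))"
proof (intro ext)
  fix x y :: "bool \<times> bool"
  show "proj (bell i j) x y = signed_conj (map_prod id (x_perm i)) (z_sign j \<circ> snd) (proj (bell 0 0)) x y"
    using assms
    by (cases x; cases y; auto simp: proj_def signed_conj_def bell_apply x_perm_def z_sign_def)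
qed

definition pauli_pair_perm :: "nat \<Rightarrow> bool \<times> bool \<Rightarrow> bool \<times> bool" where
  "pauli_pair_perm i = map_prod (x_perm i) (x_perm i)"

definition pauli_pair_sign :: "nat \<Rightarrow> bool \<times> bool \<Rightarrow> real" where
  "pauli_pair_sign j = (\<lambda>(a, b). z_sign j a * z_sign j b)"

lemma signed_involution_pauli_pair: "signed_involution (pauli_pair_perm i) (pauli_pair_sign j)"
  by unfold_locales (auto simp: pauli_pair_perm_def pauli_pair_sign_def x_perm_def z_sign_def)

lemma bell00_pauli_pair_eigenvector:
  "complex_of_real (pauli_pair_sign j x) * bell 0 0 (pauli_pair_perm i x) = bell 0 0 x"
  by (cases x) (auto simp: bell_apply[of 0 0] pauli_pair_perm_def pauli_pair_sign_def
      x_perm_def z_sign_def phi_plus_def)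

lemma projA_pauli_pair:
  assumes "i \<in> {0, 1}" "j \<in> {0, 1}"
  shows "projA i j = signed_conj (map_prod id (pauli_pair_perm i)) (pauli_pair_sign j \<circ> snd) (projA 0 0)"
proof (intro ext)
  fix x y :: four
  obtain a1 b1 a2 b2 c1 d1 c2 d2 where xy: "x = ((a1, b1), (a2, b2))" "y = ((c1, d1), (c2, d2))"
    by (metis prod.exhaust)
  show "projA i j x y = signed_conj (map_prod id (pauli_pair_perm i)) (pauli_pair_sign j \<circ> snd) (projA 0 0) x y"
    unfolding xy
    by (cases b2; cases d2; simp add: projA_def proj_bell[OF assms] signed_conj_def
        pauli_pair_perm_def pauli_pair_sign_def x_perm_def z_sign_def)
qed

lemma projB_pauli_pair:
  assumes "i \<in> {0, 1}" "j \<in> {0, 1}"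
  shows "projB i j = signed_conj (map_prod id (pauli_pair_perm i)) (pauli_pair_sign j \<circ> snd) (projB 0 0)"
proof (intro ext)
  fix x y :: four
  obtain a1 b1 a2 b2 c1 d1 c2 d2 where xy: "x = ((a1, b1), (a2, b2))" "y = ((c1, d1), (c2, d2))"
    by (metis prod.exhaust)
  show "projB i j x y = signed_conj (map_prod id (pauli_pair_perm i)) (pauli_pair_sign j \<circ> snd) (projB 0 0) x y"
    unfolding xy
    by (cases a2; cases c2; simp add: projB_def proj_bell[OF assms] signed_conj_def
        pauli_pair_perm_def pauli_pair_sign_def x_perm_def z_sign_def)
qed

abbreviation pauli_pair_conj :: "nat \<Rightarrow> nat \<Rightarrow> (bool \<times> bool) qop \<Rightarrow> (bool \<times> bool) qop" where
  "pauli_pair_conj i j \<equiv> signed_conj (pauli_pair_perm i) (pauli_pair_sign j)"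

lemma S_pF_pauli_pair_conj:
  assumes "\<rho> \<in> S_pF p F"
  shows "pauli_pair_conj i j \<rho> \<in> S_pF p F"
proof -
  interpret signed_involution "pauli_pair_perm i" "pauli_pair_sign j"
    by (rule signed_involution_pauli_pair)
  from assms obtain \<sigma> where \<rho>: "density \<rho>" "expect (bell 0 0) \<rho> = complex_of_real F"
    and \<sigma>: "density \<sigma>"
    and mixture: "\<rho> = (\<lambda>x y. complex_of_real p * proj (bell 0 0) x y + complex_of_real (1 - p) * \<sigma> x y)"
    unfolding S_pF_def by blast
  have "pauli_pair_conj i j \<rho>
      = (\<lambda>x y. complex_of_real p * proj (bell 0 0) x y
               + complex_of_real (1 - p) * pauli_pair_conj i j \<sigma> x y)"
    unfolding mixture signed_conj_combination
      signed_conj_proj_eigenvector[OF bell00_pauli_pair_eigenvector] ..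
  moreover have "expect (bell 0 0) (pauli_pair_conj i j \<rho>) = complex_of_real F"
    using \<rho> by (simp add: expect_signed_conj_eigenvector[OF bell00_pauli_pair_eigenvector])
  ultimately show ?thesis
    unfolding S_pF_def using density_signed_conj \<rho> \<sigma> by blast
qed

lemma
  assumes "i \<in> {0, 1}" "j \<in> {0, 1}"
  shows p_swap_pauli_pair_conj: "p_swap i j \<rho>1 (pauli_pair_conj i j \<rho>2) = p_swap 0 0 \<rho>1 \<rho>2"
    and F_swap_pauli_pair_conj: "F_swap i j \<rho>1 (pauli_pair_conj i j \<rho>2) = F_swap 0 0 \<rho>1 \<rho>2"
proof -
  interpret signed_involution "map_prod id (pauli_pair_perm i)" "pauli_pair_sign j \<circ> snd"
    by (rule signed_involution_lift_snd[OF signed_involution_pauli_pair])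
  show p_swap: "p_swap i j \<rho>1 (pauli_pair_conj i j \<rho>2) = p_swap 0 0 \<rho>1 \<rho>2"
    unfolding p_swap_def tensor_signed_conj_right projA_pauli_pair[OF assms]
      mmult_signed_conj trace_signed_conj ..
  show "F_swap i j \<rho>1 (pauli_pair_conj i j \<rho>2) = F_swap 0 0 \<rho>1 \<rho>2"
    unfolding F_swap_def p_swap tensor_signed_conj_right projA_pauli_pair[OF assms]
      projB_pauli_pair[OF assms] mmult_signed_conj trace_signed_conj ..
qed

lemma F_vals_outcome_independent:
  assumes "i \<in> {0, 1}" "j \<in> {0, 1}"
  shows "F_vals i j p F = F_vals 0 0 p F"
proof -
  interpret signed_involution "pauli_pair_perm i" "pauli_pair_sign j"
    by (rule signed_involution_pauli_pair)
  have swap_back: "p_swap i j \<rho>1 \<rho>2 = p_swap 0 0 \<rho>1 (pauli_pair_conj i j \<rho>2)"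
    "F_swap i j \<rho>1 \<rho>2 = F_swap 0 0 \<rho>1 (pauli_pair_conj i j \<rho>2)" for \<rho>1 \<rho>2
    using p_swap_pauli_pair_conj[OF assms, of \<rho>1 "pauli_pair_conj i j \<rho>2"]
      F_swap_pauli_pair_conj[OF assms, of \<rho>1 "pauli_pair_conj i j \<rho>2"]
    by (simp_all add: signed_conj_signed_conj)
  show ?thesis
    unfolding F_vals_def
  proof (intro Collect_cong iffI; elim exE conjE)
    fix u \<rho>1 \<rho>2
    assume "u = F_swap i j \<rho>1 \<rho>2" "\<rho>1 \<in> S_pF p F" "\<rho>2 \<in> S_pF p F" "0 < p_swap i j \<rho>1 \<rho>2"
    then show "\<exists>\<rho>1 \<rho>2. u = F_swap 0 0 \<rho>1 \<rho>2 \<and> \<rho>1 \<in> S_pF p F \<and> \<rho>2 \<in> S_pF p F \<and> 0 < p_swap 0 0 \<rho>1 \<rho>2"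
      by (intro exI[of _ \<rho>1] exI[of _ "pauli_pair_conj i j \<rho>2"])
        (simp add: swap_back S_pF_pauli_pair_conj)
  next
    fix u \<rho>1 \<rho>2
    assume "u = F_swap 0 0 \<rho>1 \<rho>2" "\<rho>1 \<in> S_pF p F" "\<rho>2 \<in> S_pF p F" "0 < p_swap 0 0 \<rho>1 \<rho>2"
    then show "\<exists>\<rho>1 \<rho>2. u = F_swap i j \<rho>1 \<rho>2 \<and> \<rho>1 \<in> S_pF p F \<and> \<rho>2 \<in> S_pF p F \<and> 0 < p_swap i j \<rho>1 \<rho>2"
      by (intro exI[of _ \<rho>1] exI[of _ "pauli_pair_conj i j \<rho>2"])
        (simp add: p_swap_pauli_pair_conj[OF assms] F_swap_pauli_pair_conj[OF assms] S_pF_pauli_pair_conj)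
  qed
qed

theorem proposition3:
  fixes p F :: real and i j :: nat
  assumes "0 \<le> F" and "F \<le> 1" and "0 \<le> p" and "p \<le> F"
    and "i \<in> {0, 1}" and "j \<in> {0, 1}"
  shows "Sup (F_vals i j p F) = Sup (F_vals 0 0 p F)
       \<and> Inf (F_vals i j p F) = Inf (F_vals 0 0 p F)"
  using F_vals_outcome_independent[OF assms(5,6)] by simp

end
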